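(* Let $(\mathcal A,d)$ be a DGA, let $a,b_1,\dots,b_n\in\mathcal A$ be closed with $|a|$ even and $a\wedge b_i$ exact, and let $\xi_i$ satisfy $d\xi_i=a\wedge b_i$. Let $c=\sum_{i=1}^n \overline{\xi_1}\wedge\cdots\wedge\overline{\xi_{i-1}}\wedge b_i\wedge\xi_{i+1}\wedge\cdots\wedge\xi_n$. Let $\sigma$ be the transposition of $\{1,\dots,n\}$ exchanging $j$ and $j+1$ for some $j$, and let $$c_\sigma=\sum_{i=1}^n \overline{\xi_{\sigma(1)}}\wedge\cdots\wedge\overline{\xi_{\sigma(i-1)}}\wedge b_{\sigma(i)}\wedge\xi_{\sigma(i+1)}\wedge\cdots\wedge\xi_{\sigma(n)}.$$ Then $c=(-1)^{(|b_j|+1)(|b_{j+1}|+1)}c_\sigma$.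
   Context: A DGA is a graded-commutative differential graded algebra over $\mathbb R$; $|x|$ denotes degree and $\overline{x}=(-1)^{|x|}x$. *)

theory Defs
  imports Complex_Main "HOL-Combinatorics.Transposition"
begin

definition sgnr :: "int \<Rightarrow> real" where
  "sgnr k = (if even k then 1 else -1)"

text \<open>The underlying real vector space is the type 'a; A k is the degree-k component,
  m the multiplication (wedge), e the unit, D the differential.\<close>
definition dga :: "(int \<Rightarrow> 'a::real_vector set) \<Rightarrow> ('a \<Rightarrow> 'a \<Rightarrow> 'a) \<Rightarrow> 'a \<Rightarrow> ('a \<Rightarrow> 'a) \<Rightarrow> bool" where
  "dga A m e D \<longleftrightarrow>
     (\<forall>k. subspace (A k)) \<and>
     (\<forall>x. \<exists>K f. finite K \<and> (\<forall>k\<in>K. f k \<in> A k) \<and> x = sum f K) \<and>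
     (\<forall>K f. finite K \<and> (\<forall>k\<in>K. f k \<in> A k) \<and> sum f K = 0 \<longrightarrow> (\<forall>k\<in>K. f k = 0)) \<and>
     (\<forall>x y z. m (x + y) z = m x z + m y z) \<and>
     (\<forall>x y z. m x (y + z) = m x y + m x z) \<and>
     (\<forall>r x y. m (r *\<^sub>R x) y = r *\<^sub>R m x y) \<and>
     (\<forall>r x y. m x (r *\<^sub>R y) = r *\<^sub>R m x y) \<and>
     (\<forall>x y z. m (m x y) z = m x (m y z)) \<and>
     e \<in> A 0 \<and> (\<forall>x. m e x = x \<and> m x e = x) \<and>
     (\<forall>k l x y. x \<in> A k \<longrightarrow> y \<in> A l \<longrightarrow> m x y \<in> A (k + l)) \<and>
     (\<forall>k l x y. x \<in> A k \<longrightarrow> y \<in> A l \<longrightarrow> m x y = sgnr (k * l) *\<^sub>R m y x) \<and>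
     linear D \<and>
     (\<forall>k x. x \<in> A k \<longrightarrow> D x \<in> A (k + 1)) \<and>
     (\<forall>x. D (D x) = 0) \<and>
     (\<forall>k x y. x \<in> A k \<longrightarrow> D (m x y) = m (D x) y + sgnr k *\<^sub>R m x (D y))"

definition mprod :: "('a \<Rightarrow> 'a \<Rightarrow> 'a) \<Rightarrow> 'a \<Rightarrow> 'a list \<Rightarrow> 'a" where
  "mprod m e xs = foldr m xs e"

text \<open>The element
  sum_{i=1}^n bar(xi_1) ... bar(xi_{i-1}) b_i xi_{i+1} ... xi_n,
  where dxi k is the degree of xi k and bar x = (-1)^{|x|} x.\<close>
definition cform :: "('a::real_vector \<Rightarrow> 'a \<Rightarrow> 'a) \<Rightarrow> 'a \<Rightarrow> (nat \<Rightarrow> int) \<Rightarrow> (nat \<Rightarrow> 'a)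
    \<Rightarrow> (nat \<Rightarrow> 'a) \<Rightarrow> nat \<Rightarrow> 'a" where
  "cform m e dxi xi b n =
     (\<Sum>i = 1..n. m (mprod m e (map (\<lambda>k. sgnr (dxi k) *\<^sub>R xi k) [1..<i]))
                    (m (b i) (mprod m e (map xi [i+1..<n+1]))))"

end

theory Submission
  imports Defs "HOL-Combinatorics.Permutations"
begin

text \<open>Write the \<open>i\<close>-th summand of \<open>c\<close> as the product of \<open>n\<close> factors: \<open>\<xi>\<^sub>k\<close> with a bar
  for \<open>k < i\<close>, \<open>b\<^sub>i\<close> at \<open>k = i\<close>, plain \<open>\<xi>\<^sub>k\<close> for \<open>k > i\<close>. The \<open>i\<close>-th summand of \<open>c\<close> and the
  \<open>\<sigma>(i)\<close>-th summand of \<open>c\<^sub>\<sigma>\<close> have the same factors outside positions \<open>j, j+1\<close>, and the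
  two adjacent factors differ by graded commutativity, together with one bar when
  \<open>i \<in> {j, j+1}\<close>. Since \<open>|a|\<close> is even, \<open>|\<xi>\<^sub>k| \<equiv> |b\<^sub>k| + 1 (mod 2)\<close>, and in all four
  cases the sign comes out as \<open>(-1)\<^bsup>(|b\<^sub>j|+1)(|b\<^sub>j\<^sub>+\<^sub>1|+1)\<^esup>\<close>; reindexing the sum by \<open>\<sigma>\<close>
  finishes the proof.\<close>

lemma dga_scaleR_left: "dga A m e D \<Longrightarrow> m (r *\<^sub>R x) y = r *\<^sub>R m x y"
  unfolding dga_def by meson

lemma dga_scaleR_right: "dga A m e D \<Longrightarrow> m x (r *\<^sub>R y) = r *\<^sub>R m x y"
  unfolding dga_def by meson

lemma dga_assoc: "dga A m e D \<Longrightarrow> m (m x y) z = m x (m y z)"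
  unfolding dga_def by meson

lemma dga_unit_left: "dga A m e D \<Longrightarrow> m e x = x"
  unfolding dga_def by meson

lemma dga_graded_comm:
  "dga A m e D \<Longrightarrow> x \<in> A k \<Longrightarrow> y \<in> A l \<Longrightarrow> m x y = sgnr (k * l) *\<^sub>R m y x"
  unfolding dga_def by meson

lemma dga_scaleR_mem: "dga A m e D \<Longrightarrow> x \<in> A k \<Longrightarrow> r *\<^sub>R x \<in> A k"
  unfolding dga_def by (meson subspace_scale)

lemma sgnr_add: "sgnr (k + l) = sgnr k * sgnr l"
  by (auto simp: sgnr_def)

lemma mprod_Cons: "mprod m e (x # xs) = m x (mprod m e xs)"
  by (simp add: mprod_def)

lemma mprod_append:
  assumes "dga A m e D"
  shows "mprod m e (xs @ ys) = m (mprod m e xs) (mprod m e ys)"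
  by (induction xs)
    (simp_all add: mprod_def dga_unit_left[OF assms] dga_assoc[OF assms])

lemma mprod_replace_adjacent:
  assumes "dga A m e D" and "m u v = c *\<^sub>R m u' v'"
  shows "mprod m e (xs @ u # v # ys) = c *\<^sub>R mprod m e (xs @ u' # v' # ys)"
proof -
  have "m u (m v y) = c *\<^sub>R m u' (m v' y)" for y
    using assms(2) by (simp add: dga_assoc[OF assms(1), symmetric] dga_scaleR_left[OF assms(1)])
  then show ?thesis
    by (simp add: mprod_append[OF assms(1)] mprod_Cons dga_scaleR_right[OF assms(1)])
qed

definition cterm :: "(nat \<Rightarrow> int) \<Rightarrow> (nat \<Rightarrow> 'a::real_vector) \<Rightarrow> (nat \<Rightarrow> 'a) \<Rightarrow> nat \<Rightarrow> nat \<Rightarrow> 'a" where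
  "cterm d xi b i k = (if k < i then sgnr (d k) *\<^sub>R xi k else if k = i then b k else xi k)"

lemma map_cterm_upt:
  assumes "i \<in> {1..n}"
  shows "map (cterm d xi b i) [1..<n+1]
    = map (\<lambda>k. sgnr (d k) *\<^sub>R xi k) [1..<i] @ b i # map xi [i+1..<n+1]"
proof -
  have "[1..<n+1] = [1..<i] @ i # [i+1..<n+1]"
    using assms upt_add_eq_append[of 1 i "n + 1 - i"] by (simp add: upt_conv_Cons)
  then show ?thesis
    by (simp add: cterm_def del: upt_Suc)
qed

lemma cform_eq_sum_mprod_cterm:
  assumes "dga A m e D"
  shows "cform m e d xi b n = (\<Sum>i = 1..n. mprod m e (map (cterm d xi b i) [1..<n+1]))"
  unfolding cform_def
proof (rule sum.cong)
  fix i assume i: "i \<in> {1..n}"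
  show "m (mprod m e (map (\<lambda>k. sgnr (d k) *\<^sub>R xi k) [1..<i]))
      (m (b i) (mprod m e (map xi [i+1..<n+1])))
    = mprod m e (map (cterm d xi b i) [1..<n+1])"
    unfolding map_cterm_upt[OF i] by (simp add: mprod_append[OF assms] mprod_Cons del: upt_Suc)
qed simp

lemma upt_split_adjacent:
  "a \<le> j \<Longrightarrow> j + 2 \<le> c \<Longrightarrow> [a..<c] = [a..<j] @ j # Suc j # [j+2..<c]"
  using upt_add_eq_append[of a j "c - j"] by (simp add: upt_conv_Cons)

lemma cterm_transpose_outside:
  assumes "k \<noteq> j" "k \<noteq> Suc j"
  defines "t \<equiv> transpose j (Suc j)"
  shows "cterm (d \<circ> t) (xi \<circ> t) (b \<circ> t) (t i) k = cterm d xi b i k"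
  using assms by (auto simp: cterm_def transpose_def)

lemma cterm_adjacent_pair_transpose:
  fixes p :: int and q :: "nat \<Rightarrow> int" and j :: nat
  defines "d \<equiv> \<lambda>k. p + q k - 1" and "t \<equiv> transpose j (Suc j)"
    and "S \<equiv> sgnr ((q j + 1) * (q (Suc j) + 1))"
  assumes dga: "dga A m e D" and "even p"
    and b: "b j \<in> A (q j)" "b (Suc j) \<in> A (q (Suc j))"
    and xi: "xi j \<in> A (d j)" "xi (Suc j) \<in> A (d (Suc j))"
  shows "m (cterm d xi b i j) (cterm d xi b i (Suc j))
    = S *\<^sub>R m (cterm (d \<circ> t) (xi \<circ> t) (b \<circ> t) (t i) j)
                 (cterm (d \<circ> t) (xi \<circ> t) (b \<circ> t) (t i) (Suc j))"
proof -
  have t: "t j = Suc j" "t (Suc j) = j" "i \<noteq> j \<Longrightarrow> i \<noteq> Suc j \<Longrightarrow> t i = i"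
    by (auto simp: t_def)
  have sign_xi_xi: "sgnr (d j * d (Suc j)) = S"
    using \<open>even p\<close> by (simp add: d_def S_def sgnr_def)
  have sign_b_xi: "sgnr (q j * d (Suc j)) = S * sgnr (d (Suc j))"
    using \<open>even p\<close> by (simp add: d_def S_def sgnr_add[symmetric]) (simp add: sgnr_def algebra_simps)
  have sign_xi_b: "sgnr (d j) * sgnr (d j * q (Suc j)) = S"
    using \<open>even p\<close> by (simp add: d_def S_def sgnr_add[symmetric]) (simp add: sgnr_def algebra_simps)
  note comm = dga_graded_comm[OF dga]
  note scaled = dga_scaleR_left[OF dga] dga_scaleR_right[OF dga]
  consider "i < j" | "i = j" | "i = Suc j" | "Suc j < i" by linarith
  then show ?thesis
  proof cases
    case 1
    then show ?thesis
      using comm[OF xi] by (simp add: cterm_def t sign_xi_xi)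
  next
    case 2
    then show ?thesis
      using comm[OF b(1) xi(2)] by (simp add: cterm_def t scaled sign_b_xi)
  next
    case 3
    then show ?thesis
      using comm[OF xi(1) b(2)] by (simp add: cterm_def t scaled sign_xi_b)
  next
    case 4
    then show ?thesis
      using comm[OF dga_scaleR_mem[OF dga xi(1)] dga_scaleR_mem[OF dga xi(2)]]
      by (simp add: cterm_def t sign_xi_xi)
  qed
qed

lemma mprod_cterm_transpose:
  fixes p :: int and q :: "nat \<Rightarrow> int" and j :: nat
  defines "d \<equiv> \<lambda>k. p + q k - 1" and "t \<equiv> transpose j (Suc j)"
    and "S \<equiv> sgnr ((q j + 1) * (q (Suc j) + 1))"
  assumes dga: "dga A m e D" and "even p" and "1 \<le> j" "Suc j \<le> n"
    and "\<forall>k\<in>{1..n}. b k \<in> A (q k)" and "\<forall>k\<in>{1..n}. xi k \<in> A (d k)"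
  shows "mprod m e (map (cterm d xi b i) [1..<n+1])
    = S *\<^sub>R mprod m e (map (cterm (d \<circ> t) (xi \<circ> t) (b \<circ> t) (t i)) [1..<n+1])"
proof -
  let ?c = "cterm d xi b i" and ?c' = "cterm (d \<circ> t) (xi \<circ> t) (b \<circ> t) (t i)"
  have split: "[1..<n+1] = [1..<j] @ j # Suc j # [j+2..<n+1]"
    using assms by (intro upt_split_adjacent) auto
  have outside: "map ?c' [1..<j] = map ?c [1..<j]" "map ?c' [j+2..<n+1] = map ?c [j+2..<n+1]"
    unfolding t_def by (auto intro!: map_cong cterm_transpose_outside)
  have "m (?c j) (?c (Suc j)) = S *\<^sub>R m (?c' j) (?c' (Suc j))"
    unfolding d_def t_def S_def
    by (rule cterm_adjacent_pair_transpose[OF dga \<open>even p\<close>])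
      (use assms in \<open>simp_all add: d_def\<close>)
  then show ?thesis
    unfolding split map_append list.map outside by (rule mprod_replace_adjacent[OF dga])
qed

theorem lemma2p4:
  fixes A :: "int \<Rightarrow> 'a::real_vector set" and m :: "'a \<Rightarrow> 'a \<Rightarrow> 'a" and e :: 'a
    and D :: "'a \<Rightarrow> 'a" and a :: 'a and p :: int
    and b xi :: "nat \<Rightarrow> 'a" and q :: "nat \<Rightarrow> int" and n j :: nat
  assumes "dga A m e D"
    and "a \<in> A p" and "even p" and "D a = 0"
    and "\<forall>i\<in>{1..n}. b i \<in> A (q i) \<and> D (b i) = 0"
    and "\<forall>i\<in>{1..n}. xi i \<in> A (p + q i - 1) \<and> D (xi i) = m a (b i)"
    and "1 \<le> j" and "j + 1 \<le> n"
  shows "cform m e (\<lambda>i. p + q i - 1) xi b n =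
         sgnr ((q j + 1) * (q (j + 1) + 1)) *\<^sub>R
           cform m e (\<lambda>i. p + q (transpose j (j + 1) i) - 1)
             (xi \<circ> transpose j (j + 1)) (b \<circ> transpose j (j + 1)) n"
proof -
  define d where "d = (\<lambda>k. p + q k - 1)"
  define t where "t = transpose j (Suc j)"
  define S where "S = sgnr ((q j + 1) * (q (Suc j) + 1))"
  define c' where "c' i = mprod m e (map (cterm (d \<circ> t) (xi \<circ> t) (b \<circ> t) i) [1..<n+1])" for i
  have "bij_betw t {1..n} {1..n}"
    unfolding t_def using assms(7,8) by (intro permutes_imp_bij[OF permutes_swap_id]) auto
  have "cform m e d xi b n = (\<Sum>i = 1..n. mprod m e (map (cterm d xi b i) [1..<n+1]))"
    by (rule cform_eq_sum_mprod_cterm[OF assms(1)])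
  also have "\<dots> = (\<Sum>i = 1..n. S *\<^sub>R c' (t i))"
    unfolding c'_def d_def t_def S_def using assms
    by (intro sum.cong refl mprod_cterm_transpose[OF assms(1)]) auto
  also have "\<dots> = S *\<^sub>R (\<Sum>i = 1..n. c' (t i))"
    by (simp add: scaleR_sum_right)
  also have "(\<Sum>i = 1..n. c' (t i)) = (\<Sum>i = 1..n. c' i)"
    by (rule sum.reindex_bij_betw[OF \<open>bij_betw t {1..n} {1..n}\<close>])
  also have "(\<Sum>i = 1..n. c' i) = cform m e (d \<circ> t) (xi \<circ> t) (b \<circ> t) n"
    unfolding c'_def by (rule cform_eq_sum_mprod_cterm[OF assms(1), symmetric])
  finally show ?thesis
    by (simp add: d_def t_def S_def comp_def)
qed

end
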